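(* Let $p$ be a prime, $k\ge1$, and $a,b$ integers with $p\nmid a$; let $A$ be the permutation $x\mapsto ax+b$ of $\mathbb{Z}/p^k\mathbb{Z}$. Write $\operatorname{ord}(a)$ for the multiplicative order of $a$ modulo $p^k$, $o'=\operatorname{ord}(a)_{p'}$, $w=\nu_p(\operatorname{ord}(a))$, and $\operatorname{aord}(b)$ for the additive order of $b$ in $\mathbb{Z}/p^k\mathbb{Z}$. (I) If $p>2$: (a) if $a\not\equiv1\pmod p$: $\operatorname{CT}(A)=x_1\,x_{o'}^{(p^{k-w}-1)/o'}\prod_{s=1}^{w}x_{o'p^s}^{p^{k-1-w}(p-1)/o'}$; (b) if $a\equiv1\pmod p$ and $\nu_p^{(k)}(b)\ge t:=\nu_p^{(k)}(a-1)$: $\operatorname{CT}(A)=x_1^{p^{t}}\prod_{s=1}^{k-t}x_{p^s}^{p^{t-1}(p-1)}$; (c) if $a\equiv1\pmod p$ and $\nu_p^{(k)}(b)<\nu_p^{(k)}(a-1)$: $\operatorname{CT}(A)=x_{\operatorname{aord}(b)}^{p^k/\operatorname{aord}(b)}$. (II) If $p=2$: (a) if $k=1$, or $k=2$ and $a\equiv1\pmod 4$: $\operatorname{CT}(A)=x_{\operatorname{aord}(b)}^{2^k/\operatorname{aord}(b)}$; (b) if $k=2$, $a\equiv3\pmod4$: $\operatorname{CT}(A)=x_1^2x_2$ if $b$ is even and $x_2^2$ if $b$ is odd; (c) if $k\ge3$, write $a\equiv(-1)^\epsilon5^e\pmod{2^k}$ with $\epsilon\in\{0,1\}$, $e\in\{0,\dots,2^{k-2}-1\}$.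 If $\epsilon=1$ and $b$ odd: $\operatorname{CT}(A)=x_{2^{k-1-\nu}}^{2^{1+\nu}}$ with $\nu=\nu_2^{(k-2)}(e)$. If $\epsilon=1$ and $b$ even: $\operatorname{CT}(A)=x_1^2x_2^{2^{2+\nu'}-1}\prod_{s=2}^{k-2-\nu'}x_{2^s}^{2^{1+\nu'}}$ with $\nu'=\nu_2^{(k-3)}(e)$. If $\epsilon=0$ and $\nu_2^{(k)}(b)<\nu_2^{(k)}(a-1)$: $\operatorname{CT}(A)=x_{\operatorname{aord}(b)}^{2^k/\operatorname{aord}(b)}$. If $\epsilon=0$ and $\nu_2^{(k)}(b)\ge\nu_2^{(k)}(a-1)$: $\operatorname{CT}(A)=x_1^{2^{2+\nu}}\prod_{s=1}^{k-2-\nu}x_{2^s}^{2^{1+\nu}}$ with $\nu=\nu_2^{(k-2)}(e)$.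
   Context: For a permutation $h$ of a set of size $n$, $\operatorname{CT}(h)=x_1^{k_1}\cdots x_n^{k_n}$ where $k_i$ is the number of cycles of length $i$ of $h$; empty products equal $1$. $\nu_p(n)$ is the exponent of $p$ in $n$ ($\nu_p(0)=\infty$), $\nu_p^{(k)}(n)=\min\{\nu_p(n),k\}$; for $N>0$, $N_{p'}=N/p^{\nu_p(N)}$ is the $p'$-part of $N$. Every unit modulo $2^k$ ($k\ge3$) has a unique representation $(-1)^\epsilon 5^e$ as indicated. *)

theory Defs
  imports "HOL-Number_Theory.Number_Theory"
begin

definition orbit_of :: "('a \<Rightarrow> 'a) \<Rightarrow> 'a \<Rightarrow> 'a set" where
  "orbit_of f x = {(f ^^ n) x | n. True}"

text \<open>Cycle type of a permutation f of a finite set S, as its exponent vector: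
  cycle_type f S i = number of cycles of length i (= exponent of x_i in CT).\<close>
definition cycle_type :: "('a \<Rightarrow> 'a) \<Rightarrow> 'a set \<Rightarrow> nat \<Rightarrow> nat" where
  "cycle_type f S i = card {orbit_of f x | x. x \<in> S \<and> card (orbit_of f x) = i}"

text \<open>Monomial x_{j1}^{e1} ... x_{jm}^{em} (list of (index, exponent)), as exponent vector.\<close>
definition monom_of :: "(nat \<times> nat) list \<Rightarrow> nat \<Rightarrow> nat" where
  "monom_of xs i = (\<Sum>(j, e)\<leftarrow>xs. if j = i then e else 0)"

text \<open>The affine map x \<mapsto> a x + b on Z/p^k Z, represented on {0..<p^k}.\<close>
definition affine_map :: "nat \<Rightarrow> int \<Rightarrow> int \<Rightarrow> nat \<Rightarrow> nat" where
  "affine_map m a b x = nat ((a * int x + b) mod int m)"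

definition nu_trunc :: "nat \<Rightarrow> nat \<Rightarrow> int \<Rightarrow> nat" where
  "nu_trunc p k n = (if n = 0 then k else min (multiplicity (int p) n) k)"

definition p_prime_part :: "nat \<Rightarrow> nat \<Rightarrow> nat" where
  "p_prime_part p N = N div p ^ multiplicity p N"

definition aord :: "nat \<Rightarrow> int \<Rightarrow> nat" where
  "aord m b = (LEAST n. n > 0 \<and> [int n * b = 0] (mod int m))"

end

theory Submission
  imports Defs
begin

(* Writing v(x) for the p-adic valuation of (a - 1) x + b truncated at k, the n-th iterate of
   x \<mapsto> a x + b fixes x iff p ^ (k - v(x)) divides 1 + a + ... + a ^ (n - 1). So the period of x
   is g (k - v(x)), where g j is the order of these geometric sums modulo p ^ j, and the cycle type
   is read off from how many x have each value of v(x): these counts are powers of p, since the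
   congruence (a - 1) x + b = 0 (mod p ^ j) is linear. The orders g j come from lifting the exponent:
   g j = p ^ j if a = 1 (mod p) (and mod 4 when p = 2); g j = d p ^ (j - c) for j > 0 if
   a is not 1 mod p, with d the order of a mod p; and for p = 2 and a = 3 (mod 4) the factorisation
   1 + a + ... + a ^ (2 q - 1) = (1 + a) (1 + a\<^sup>2 + ... + (a\<^sup>2) ^ (q - 1)) reduces to the first case. *)

section \<open>Geometric sums and lifting the exponent\<close>

definition geom_sum :: "'a::comm_semiring_1 \<Rightarrow> nat \<Rightarrow> 'a" where
  "geom_sum u n = (\<Sum>i<n. u ^ i)"

lemma geom_sum_0 [simp]: "geom_sum u 0 = 0"
  by (simp add: geom_sum_def)

lemma geom_sum_Suc: "geom_sum u (Suc n) = geom_sum u n + u ^ n"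
  by (simp add: geom_sum_def)

lemma geom_sum_add: "geom_sum u (m + n) = geom_sum u m + u ^ m * geom_sum u n"
  by (induction n) (simp_all add: geom_sum_Suc algebra_simps power_add)

lemma geom_sum_mult: "geom_sum u (q * n) = geom_sum u n * geom_sum (u ^ n) q"
proof (induction q)
  case (Suc q)
  have "geom_sum u (n + q * n) = geom_sum u n * (1 + u ^ n * geom_sum (u ^ n) q)"
    unfolding geom_sum_add Suc.IH by (simp add: algebra_simps)
  also have "1 + u ^ n * geom_sum (u ^ n) q = geom_sum (u ^ n) (Suc q)"
    using geom_sum_add[of "u ^ n" 1 q] by (simp add: geom_sum_def)
  finally show ?case by simp
qed simp

lemma power_diff_1_eq_geom_sum: "(u::'a::comm_ring_1) ^ n - 1 = (u - 1) * geom_sum u n"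
  by (simp add: geom_sum_def power_diff_1_eq)

lemma geom_sum_cong_of_nat:
  fixes u :: int
  assumes "[u = 1] (mod m)"
  shows "[geom_sum u n = int n] (mod m)"
proof (induction n)
  case (Suc n)
  have "[geom_sum u n + u ^ n = int n + 1 ^ n] (mod m)"
    by (intro cong_add Suc.IH cong_pow assms)
  then show ?case by (simp add: geom_sum_Suc add.commute)
qed simp

lemma power_one_plus_cong_linear: "(d::int)\<^sup>2 dvd (1 + d) ^ n - 1 - int n * d"
proof (induction n)
  case (Suc n)
  then obtain q where q: "(1 + d) ^ n - 1 - int n * d = d\<^sup>2 * q" by blast
  have "(1 + d) ^ Suc n - 1 - int (Suc n) * d = d\<^sup>2 * ((1 + d) * q + int n)"
    using q by (simp add: algebra_simps power2_eq_square)
  then show ?case by simp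
qed simp

lemma double_geom_sum_cong_quadratic:
  "(d::int)\<^sup>2 dvd 2 * geom_sum (1 + d) n - 2 * int n - d * int n * (int n - 1)"
proof (induction n)
  case (Suc n)
  have eq: "2 * geom_sum (1 + d) (Suc n) - 2 * int (Suc n) - d * int (Suc n) * (int (Suc n) - 1)
      = (2 * geom_sum (1 + d) n - 2 * int n - d * int n * (int n - 1))
        + 2 * ((1 + d) ^ n - 1 - int n * d)"
    by (simp add: geom_sum_Suc algebra_simps)
  moreover have "d\<^sup>2 dvd 2 * ((1 + d) ^ n - 1 - int n * d)"
    using power_one_plus_cong_linear[of d n] by (rule dvd_mult)
  with Suc.IH show ?case
    unfolding eq by (rule dvd_add)
qed simp

text \<open>For \<open>p = 2\<close> the hypothesis \<open>w = 1 (mod p)\<close> alone would not do: \<open>1 + w\<close> must be \<open>2\<close> modulo \<open>4\<close>.\<close>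

lemma geom_sum_prime_cong:
  assumes p: "prime p" and w: "[w = 1] (mod int p)" and w4: "p = 2 \<Longrightarrow> [w = 1] (mod 4)"
  shows "[geom_sum w p = int p] (mod (int p)\<^sup>2)"
proof (cases "p = 2")
  case True
  obtain c where "w = 1 + 4 * c"
    using w4[OF True] by (metis cong_iff_dvd_diff dvdE diff_eq_eq add.commute)
  then have "geom_sum w p - int p = (int p)\<^sup>2 * c"
    using True by (simp add: geom_sum_def numeral_2_eq_2)
  then show ?thesis
    unfolding cong_iff_dvd_diff by simp
next
  case False
  then have "odd p"
    using prime_ge_2_nat[OF p] prime_odd_nat[OF p] by simp
  obtain c where c: "w = 1 + int p * c"
    using w by (metis cong_iff_dvd_diff dvdE diff_eq_eq add.commute)
  have "(int p)\<^sup>2 dvd 2 * geom_sum w p - 2 * int p - int p * c * int p * (int p - 1)"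
    using dvd_trans[OF _ double_geom_sum_cong_quadratic[of "int p * c" p]] c
    by (simp add: power_mult_distrib)
  moreover have "(int p)\<^sup>2 dvd int p * c * int p * (int p - 1)"
    by (simp add: power2_eq_square)
  ultimately have "(int p)\<^sup>2 dvd (2 * geom_sum w p - 2 * int p - int p * c * int p * (int p - 1))
                     + int p * c * int p * (int p - 1)"
    by (rule dvd_add)
  then have "(int p)\<^sup>2 dvd 2 * (geom_sum w p - int p)"
    by (simp add: right_diff_distrib)
  moreover have "coprime ((int p)\<^sup>2) 2"
    using \<open>odd p\<close> by simp
  ultimately have "(int p)\<^sup>2 dvd geom_sum w p - int p"
    using coprime_dvd_mult_right_iff by blast
  then show ?thesis
    by (simp add: cong_iff_dvd_diff)
qed

lemma pow_Suc_dvd_mult_geom_sum_prime_iff: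
  assumes p: "prime p" and w: "[w = 1] (mod int p)" and w4: "p = 2 \<Longrightarrow> [w = 1] (mod 4)"
  shows "int p ^ Suc j dvd s * geom_sum w p \<longleftrightarrow> int p ^ j dvd s"
proof -
  obtain r where "geom_sum w p - int p = (int p)\<^sup>2 * r"
    using geom_sum_prime_cong[OF p w w4] unfolding cong_iff_dvd_diff by auto
  then have "geom_sum w p = int p * (1 + int p * r)"
    by (simp add: power2_eq_square algebra_simps)
  then have "int p ^ Suc j dvd s * geom_sum w p \<longleftrightarrow> int p * int p ^ j dvd int p * (s * (1 + int p * r))"
    by (simp add: ac_simps)
  also have "\<dots> \<longleftrightarrow> int p ^ j dvd s * (1 + int p * r)"
    using p by (simp add: prime_gt_0_nat)
  finally have "int p ^ Suc j dvd s * geom_sum w p \<longleftrightarrow> int p ^ j dvd s * (1 + int p * r)" .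
  moreover have "\<not> int p dvd 1 + int p * r"
  proof
    assume "int p dvd 1 + int p * r"
    then have "int p dvd 1"
      by (simp add: dvd_add_left_iff)
    then show False
      using p by (simp add: prime_gt_1_nat)
  qed
  then have "coprime (int p ^ j) (1 + int p * r)"
    using p by (simp add: prime_imp_coprime)
  ultimately show ?thesis
    by (simp add: coprime_dvd_mult_left_iff)
qed

lemma pow_dvd_geom_sum_iff:
  assumes p: "prime p" and u: "[u = 1] (mod int p)" and u4: "p = 2 \<Longrightarrow> [u = 1] (mod 4)"
  shows "int p ^ j dvd geom_sum u n \<longleftrightarrow> p ^ j dvd n"
  using u u4
proof (induction j arbitrary: n u)
  case (Suc j)
  show ?case
  proof (cases "p dvd n")
    case False
    have "[geom_sum u n = int n] (mod int p)"
      using Suc.prems(1) by (rule geom_sum_cong_of_nat)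
    then have "\<not> int p dvd geom_sum u n"
      using False by (simp add: cong_dvd_iff)
    then have "\<not> int p ^ Suc j dvd geom_sum u n"
      using dvd_trans[of "int p" "int p ^ Suc j"] by auto
    moreover have "\<not> p ^ Suc j dvd n"
      using False dvd_trans[of p "p ^ Suc j" n] by auto
    ultimately show ?thesis
      by simp
  next
    case True
    then obtain n' where n: "n = p * n'" ..
    have "[u ^ n' = 1] (mod int p)" "p = 2 \<Longrightarrow> [u ^ n' = 1] (mod 4)"
      using cong_pow[OF Suc.prems(1), of n'] cong_pow[OF Suc.prems(2), of n'] by simp_all
    then have "int p ^ Suc j dvd geom_sum u n \<longleftrightarrow> int p ^ j dvd geom_sum u n'"
      unfolding n geom_sum_mult by (rule pow_Suc_dvd_mult_geom_sum_prime_iff[OF p])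
    also have "\<dots> \<longleftrightarrow> p ^ Suc j dvd n"
      using Suc.IH[OF Suc.prems] p by (simp add: n prime_gt_0_nat)
    finally show ?thesis .
  qed
qed simp

section \<open>Truncated valuations\<close>

lemma nu_trunc_le: "nu_trunc p k n \<le> k"
  by (simp add: nu_trunc_def)

lemma pow_dvd_iff_le_nu_trunc:
  assumes p: "prime p" and j: "j \<le> k"
  shows "int p ^ j dvd n \<longleftrightarrow> j \<le> nu_trunc p k n"
proof (cases "n = 0")
  case False
  have "\<not> is_unit (int p)"
    using prime_gt_1_nat[OF p] by simp
  then show ?thesis
    using False j power_dvd_iff_le_multiplicity[of n "int p" j] by (auto simp: nu_trunc_def)
qed (use j in \<open>simp add: nu_trunc_def\<close>)

lemma nu_trunc_eqI:
  assumes p: "prime p" and v: "v \<le> k" and dvd: "\<And>j. j \<le> k \<Longrightarrow> int p ^ j dvd n \<longleftrightarrow> j \<le> v"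
  shows "nu_trunc p k n = v"
proof (rule antisym)
  show "nu_trunc p k n \<le> v"
    using dvd[OF nu_trunc_le[of p k n]] pow_dvd_iff_le_nu_trunc[OF p nu_trunc_le[of p k n], where n = n]
    by simp
  show "v \<le> nu_trunc p k n"
    using dvd[of v] pow_dvd_iff_le_nu_trunc[OF p v] v by simp
qed

lemma pow_dvd_mult_iff_nu_trunc:
  assumes p: "prime p" and K: "K \<le> k"
  shows "int p ^ K dvd m * n \<longleftrightarrow> int p ^ (K - nu_trunc p k n) dvd m"
proof (cases "K \<le> nu_trunc p k n")
  case True
  then have "int p ^ K dvd n"
    using pow_dvd_iff_le_nu_trunc[OF p K] by simp
  then show ?thesis
    using True by simp
next
  case False
  define v where "v = nu_trunc p k n"
  have "n \<noteq> 0" "v = multiplicity (int p) n"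
    using False K by (auto simp: v_def nu_trunc_def)
  moreover have "\<not> is_unit (int p)"
    using prime_gt_1_nat[OF p] by simp
  ultimately obtain n' where n: "n = int p ^ v * n'" "\<not> int p dvd n'"
    using multiplicity_decompose' by metis
  have "coprime (int p ^ (K - v)) n'"
    using n(2) p by (simp add: prime_imp_coprime)
  have "int p ^ K = int p ^ v * int p ^ (K - v)"
    using False by (simp add: v_def flip: power_add)
  then have "int p ^ K dvd m * n \<longleftrightarrow> int p ^ (K - v) dvd m * n'"
    using p by (simp add: n prime_gt_0_nat ac_simps)
  also have "\<dots> \<longleftrightarrow> int p ^ (K - v) dvd m"
    using \<open>coprime _ n'\<close> by (rule coprime_dvd_mult_left_iff)
  finally show ?thesis
    by (simp add: v_def)
qed

lemma nu_trunc_cong: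
  assumes p: "prime p" and "[n = n'] (mod int p ^ k)"
  shows "nu_trunc p k n' = nu_trunc p k n"
proof (rule nu_trunc_eqI[OF p nu_trunc_le])
  fix j assume j: "j \<le> k"
  then have "[n = n'] (mod int p ^ j)"
    using assms(2) cong_dvd_modulus le_imp_power_dvd by blast
  then show "int p ^ j dvd n' \<longleftrightarrow> j \<le> nu_trunc p k n"
    using pow_dvd_iff_le_nu_trunc[OF p j] cong_dvd_iff by blast
qed

lemma nu_trunc_uminus: "prime p \<Longrightarrow> nu_trunc p k (- n) = nu_trunc p k n"
  by (rule nu_trunc_eqI) (simp_all add: nu_trunc_le pow_dvd_iff_le_nu_trunc)

lemma nu_trunc_smaller_bound: "k' \<le> k \<Longrightarrow> nu_trunc p k' n = min (nu_trunc p k n) k'"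
  by (auto simp: nu_trunc_def)

lemma nu_trunc_add_eq_left:
  assumes p: "prime p" and less: "nu_trunc p k n < nu_trunc p k m"
  shows "nu_trunc p k (m + n) = nu_trunc p k n"
proof (rule nu_trunc_eqI[OF p nu_trunc_le])
  fix j assume j: "j \<le> k"
  show "int p ^ j dvd m + n \<longleftrightarrow> j \<le> nu_trunc p k n"
  proof (cases "j \<le> nu_trunc p k m")
    case True
    then have "int p ^ j dvd m"
      using pow_dvd_iff_le_nu_trunc[OF p j] by simp
    then have "int p ^ j dvd m + n \<longleftrightarrow> int p ^ j dvd n"
      by (simp add: dvd_add_right_iff)
    then show ?thesis
      using pow_dvd_iff_le_nu_trunc[OF p j, of n] by simp
  next
    case False
    define s where "s = nu_trunc p k n"
    have s: "Suc s \<le> k"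
      using less nu_trunc_le[of p k m] by (simp add: s_def)
    have "int p ^ Suc s dvd m" "\<not> int p ^ Suc s dvd n"
      using less pow_dvd_iff_le_nu_trunc[OF p s] by (simp_all add: s_def)
    then have "\<not> int p ^ Suc s dvd m + n"
      by (simp add: dvd_add_right_iff)
    moreover have "int p ^ Suc s dvd int p ^ j"
      using False less by (intro le_imp_power_dvd) (simp add: s_def)
    ultimately have "\<not> int p ^ j dvd m + n"
      using dvd_trans by blast
    then show ?thesis
      using False less by simp
  qed
qed

section \<open>Counting solutions of linear congruences\<close>

lemma card_residue_class:
  fixes M N r :: nat
  assumes "r < M"
  shows "card {x \<in> {0..<M * N}. x mod M = r} = N"
proof -
  have "{x \<in> {0..<M * N}. x mod M = r} = (\<lambda>q. r + M * q) ` {0..<N}"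
  proof (intro equalityI subsetI)
    fix x assume x: "x \<in> {x \<in> {0..<M * N}. x mod M = r}"
    then have "x = r + M * (x div M)" "x div M < N"
      using mod_mult_div_eq[of x M] by (auto simp: less_mult_imp_div_less mult.commute)
    then show "x \<in> (\<lambda>q. r + M * q) ` {0..<N}"
      by (metis atLeastLessThan_iff image_eqI zero_le)
  next
    fix x assume "x \<in> (\<lambda>q. r + M * q) ` {0..<N}"
    then obtain q where "q < N" "x = r + M * q" by auto
    moreover have "r + M * q < M * Suc q"
      using assms by simp
    moreover have "M * Suc q \<le> M * N"
      using \<open>q < N\<close> by (intro mult_le_mono2) simp
    ultimately show "x \<in> {x \<in> {0..<M * N}. x mod M = r}"
      using assms by simp
  qed
  moreover have "inj_on (\<lambda>q. r + M * q) {0..<N}"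
    using assms by (auto simp: inj_on_def)
  ultimately show ?thesis
    by (simp add: card_image)
qed

lemma card_linear_cong_solutions:
  assumes q: "0 < q" and cop: "coprime \<alpha> (int q)" and i: "i \<le> K"
  shows "card {x \<in> {0..<q ^ K}. int q ^ i dvd \<alpha> * int x + \<beta>} = q ^ (K - i)"
proof -
  define Q where "Q = int q ^ i"
  have "coprime \<alpha> Q"
    using cop by (simp add: Q_def)
  then obtain z where z: "[\<alpha> * z = 1] (mod Q)"
    using cong_solve_coprime_int by blast
  have Q0: "Q > 0"
    using q by (simp add: Q_def)
  define x0 where "x0 = nat ((- \<beta> * z) mod Q)"
  have x0: "int x0 = (- \<beta> * z) mod Q" "x0 < q ^ i"
    using Q0 pos_mod_bound[OF Q0, of "- \<beta> * z"] by (simp_all add: x0_def Q_def nat_less_iff)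
  have inv: "[\<alpha> * (- \<beta> * z) = - \<beta>] (mod Q)"
    using cong_scalar_left[OF z, of "- \<beta>"] by (simp add: ac_simps)
  have solution: "Q dvd \<alpha> * int x + \<beta> \<longleftrightarrow> x mod q ^ i = x0" for x
  proof -
    have "Q dvd \<alpha> * int x + \<beta> \<longleftrightarrow> [\<alpha> * int x = - \<beta>] (mod Q)"
      by (simp add: cong_iff_dvd_diff)
    also have "\<dots> \<longleftrightarrow> [\<alpha> * int x = \<alpha> * (- \<beta> * z)] (mod Q)"
      using inv by (meson cong_sym cong_trans)
    also have "\<dots> \<longleftrightarrow> [int x = - \<beta> * z] (mod Q)"
      using \<open>coprime \<alpha> Q\<close> by (rule cong_mult_lcancel)
    also have "\<dots> \<longleftrightarrow> x mod q ^ i = x0"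
      using x0(1)[symmetric] by (simp add: cong_def Q_def flip: zmod_int of_nat_power)
    finally show ?thesis .
  qed
  have "{x \<in> {0..<q ^ K}. int q ^ i dvd \<alpha> * int x + \<beta>} = {x \<in> {0..<q ^ i * q ^ (K - i)}. x mod q ^ i = x0}"
    using solution i by (auto simp: Q_def simp flip: power_add)
  also have "card \<dots> = q ^ (K - i)"
    using x0(2) by (rule card_residue_class)
  finally show ?thesis .
qed

lemma card_nu_trunc_linear_ge:
  assumes p: "prime p" and t: "nu_trunc p k (a - 1) = t" and b: "int p ^ t dvd b"
    and j: "t \<le> j" "j \<le> k"
  shows "card {x \<in> {0..<p ^ k}. j \<le> nu_trunc p k ((a - 1) * int x + b)} = p ^ (k + t - j)"
proof -
  have t_le: "t \<le> k"
    using j by simp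
  obtain \<alpha> where \<alpha>: "a - 1 = int p ^ t * \<alpha>"
    using pow_dvd_iff_le_nu_trunc[OF p t_le, of "a - 1"] t by auto
  obtain \<beta> where \<beta>: "b = int p ^ t * \<beta>"
    using b by blast
  have "int p ^ j dvd (a - 1) * int x + b \<longleftrightarrow> int p ^ (j - t) dvd \<alpha> * int x + \<beta>" for x
  proof -
    have "(a - 1) * int x + b = int p ^ t * (\<alpha> * int x + \<beta>)"
      by (simp add: \<alpha> \<beta> algebra_simps)
    moreover have "int p ^ j = int p ^ t * int p ^ (j - t)"
      using j by (simp flip: power_add)
    ultimately show ?thesis
      using p by (simp add: prime_gt_0_nat)
  qed
  then have "{x \<in> {0..<p ^ k}. j \<le> nu_trunc p k ((a - 1) * int x + b)}
      = {x \<in> {0..<p ^ k}. int p ^ (j - t) dvd \<alpha> * int x + \<beta>}"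
    using pow_dvd_iff_le_nu_trunc[OF p j(2)] by auto
  also have "card \<dots> = p ^ (k - (j - t))"
  proof (cases "t = k")
    case True
    then show ?thesis
      using j by simp
  next
    case False
    then have "\<not> int p ^ Suc t dvd a - 1"
      using pow_dvd_iff_le_nu_trunc[OF p, of "Suc t" k "a - 1"] t t_le by simp
    then have "\<not> int p dvd \<alpha>"
      by (simp add: \<alpha>)
    then have "coprime (int p) \<alpha>"
      using p by (intro prime_imp_coprime) simp_all
    then have "coprime \<alpha> (int p)"
      by (simp add: coprime_commute)
    then show ?thesis
      using p j by (intro card_linear_cong_solutions) (auto simp: prime_gt_0_nat)
  qed
  finally show ?thesis
    using j by simp
qed

lemma aord_prime_power:
  assumes p: "prime p"
  shows "aord (p ^ k) b = p ^ (k - nu_trunc p k b)"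
proof -
  have dvd_iff: "[int n * b = 0] (mod int (p ^ k)) \<longleftrightarrow> p ^ (k - nu_trunc p k b) dvd n" for n
    using pow_dvd_mult_iff_nu_trunc[OF p order_refl, where m = "int n" and n = b]
    by (simp add: cong_0_iff flip: of_nat_power)
  show ?thesis
    unfolding aord_def
  proof (rule Least_equality)
    show "0 < p ^ (k - nu_trunc p k b) \<and> [int (p ^ (k - nu_trunc p k b)) * b = 0] (mod int (p ^ k))"
      using dvd_iff[of "p ^ (k - nu_trunc p k b)"] p by (simp add: prime_gt_0_nat)
  qed (use dvd_iff in \<open>auto dest: dvd_imp_le\<close>)
qed

section \<open>Orbits and cycle types\<close>

lemma orbit_of_trans: "y \<in> orbit_of f x \<Longrightarrow> orbit_of f y \<subseteq> orbit_of f x"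
  by (auto simp: orbit_of_def simp flip: funpow_add comp_apply[of "f ^^ _" "f ^^ _"])

lemma self_in_orbit_of: "x \<in> orbit_of f x"
  by (auto simp: orbit_of_def intro: exI[of _ 0])

lemma orbit_of_periodic:
  assumes "(f ^^ P) x = x" "0 < P"
  shows "orbit_of f x = (\<lambda>n. (f ^^ n) x) ` {..<P}"
proof (intro equalityI subsetI)
  fix y assume "y \<in> orbit_of f x"
  then obtain n where "y = (f ^^ (n mod P)) x"
    using funpow_mod_eq[OF assms(1)] by (auto simp: orbit_of_def)
  then show "y \<in> (\<lambda>n. (f ^^ n) x) ` {..<P}"
    using assms(2) by simp
qed (auto simp: orbit_of_def)

lemma orbit_of_eq:
  assumes "(f ^^ P) x = x" "0 < P" and y: "y \<in> orbit_of f x"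
  shows "orbit_of f y = orbit_of f x"
proof
  show "orbit_of f y \<subseteq> orbit_of f x"
    using y by (rule orbit_of_trans)
  obtain i where i: "y = (f ^^ i) x"
    using y by (auto simp: orbit_of_def)
  have "(f ^^ (P * i - i)) y = (f ^^ (P * i)) x"
    using assms(2) by (simp add: i mult_le_mono1 flip: funpow_add comp_apply[of "f ^^ _"])
  also have "\<dots> = x"
    using funpow_mod_eq[OF assms(1), where m = "P * i"] by simp
  finally have "x \<in> orbit_of f y"
    by (auto simp: orbit_of_def)
  then show "orbit_of f x \<subseteq> orbit_of f y"
    by (rule orbit_of_trans)
qed

lemma card_orbit_of:
  assumes period: "\<And>n. (f ^^ n) x = x \<longleftrightarrow> P dvd n" and P: "0 < P"
  shows "card (orbit_of f x) = P"
proof -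
  have eq: "i = j" if "(f ^^ i) x = (f ^^ j) x" "i \<le> j" "j < P" for i j
  proof -
    have "(f ^^ (P - j + i)) x = (f ^^ (P - j)) ((f ^^ j) x)"
      using that(1) by (simp add: funpow_add)
    also have "\<dots> = x"
      using period[of P] that(3) by (simp flip: funpow_add comp_apply[of "f ^^ _"])
    finally have "P dvd P - j + i"
      using period by blast
    show "i = j"
    proof (rule ccontr)
      assume "i \<noteq> j"
      then have "0 < P - j + i" "P - j + i < P"
        using that(2,3) by auto
      then show False
        using \<open>P dvd P - j + i\<close> by (auto dest: dvd_imp_le)
    qed
  qed
  have "inj_on (\<lambda>n. (f ^^ n) x) {..<P}"
    by (rule inj_onI) (metis eq lessThan_iff nat_le_linear)
  then show ?thesis
    using orbit_of_periodic[where f = f and P = P and x = x] period P by (simp add: card_image)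
qed

context
  fixes f :: "'a \<Rightarrow> 'a" and S :: "'a set" and P :: "'a \<Rightarrow> nat"
  assumes maps: "\<And>x. x \<in> S \<Longrightarrow> f x \<in> S"
    and pos: "\<And>x. x \<in> S \<Longrightarrow> 0 < P x"
    and period: "\<And>x n. x \<in> S \<Longrightarrow> (f ^^ n) x = x \<longleftrightarrow> P x dvd n"
begin

lemma funpow_period_self: "x \<in> S \<Longrightarrow> (f ^^ P x) x = x"
  using period by simp

lemma card_orbit_of_eq_period: "x \<in> S \<Longrightarrow> card (orbit_of f x) = P x"
  using period pos by (rule card_orbit_of)

lemma orbit_of_subset: "x \<in> S \<Longrightarrow> orbit_of f x \<subseteq> S"
proof -
  assume "x \<in> S"
  then have "(f ^^ n) x \<in> S" for n
    by (induction n) (auto intro: maps)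
  then show ?thesis
    by (auto simp: orbit_of_def)
qed

lemma orbit_of_disjoint:
  assumes "x1 \<in> S" "x2 \<in> S" "orbit_of f x1 \<noteq> orbit_of f x2"
  shows "orbit_of f x1 \<inter> orbit_of f x2 = {}"
proof -
  have "orbit_of f z = orbit_of f x1" "orbit_of f z = orbit_of f x2"
    if "z \<in> orbit_of f x1 \<inter> orbit_of f x2" for z
    using orbit_of_eq[OF funpow_period_self pos] assms(1,2) that by blast+
  then show ?thesis
    using assms(3) by blast
qed

lemma Union_orbits_of_card:
  "\<Union>{orbit_of f x | x. x \<in> S \<and> card (orbit_of f x) = L} = {x \<in> S. P x = L}"
proof (intro equalityI subsetI)
  fix y assume "y \<in> \<Union>{orbit_of f x | x. x \<in> S \<and> card (orbit_of f x) = L}"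
  then obtain x where x: "x \<in> S" "P x = L" "y \<in> orbit_of f x"
    by (auto simp: card_orbit_of_eq_period)
  then have "y \<in> S"
    using orbit_of_subset by blast
  moreover have "P y = L"
    using card_orbit_of_eq_period[OF \<open>y \<in> S\<close>] card_orbit_of_eq_period[OF x(1)]
      orbit_of_eq[OF funpow_period_self[OF x(1)] pos[OF x(1)] x(3)] x(2) by simp
  ultimately show "y \<in> {x \<in> S. P x = L}"
    by simp
next
  fix y assume "y \<in> {x \<in> S. P x = L}"
  then show "y \<in> \<Union>{orbit_of f x | x. x \<in> S \<and> card (orbit_of f x) = L}"
    using self_in_orbit_of card_orbit_of_eq_period by fastforce
qed

lemma cycle_type_eq_card_div:
  assumes fin: "finite S"
  shows "cycle_type f S L = card {x \<in> S. P x = L} div L"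
proof -
  define Orbs where "Orbs = {orbit_of f x | x. x \<in> S \<and> card (orbit_of f x) = L}"
  have union: "\<Union>Orbs = {x \<in> S. P x = L}"
    unfolding Orbs_def by (rule Union_orbits_of_card)
  have "finite Orbs"
    using fin by (auto simp: Orbs_def)
  moreover have "finite (\<Union>Orbs)"
    using fin by (simp add: union)
  moreover have "\<forall>c\<in>Orbs. card c = L"
    by (auto simp: Orbs_def)
  moreover have "\<forall>c1\<in>Orbs. \<forall>c2\<in>Orbs. c1 \<noteq> c2 \<longrightarrow> c1 \<inter> c2 = {}"
  proof (intro ballI impI)
    fix c1 c2 assume "c1 \<in> Orbs" "c2 \<in> Orbs" "c1 \<noteq> c2"
    then show "c1 \<inter> c2 = {}"
      unfolding Orbs_def using orbit_of_disjoint by blast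
  qed
  ultimately have "L * card Orbs = card {x \<in> S. P x = L}"
    by (simp add: card_partition flip: union)
  moreover have "L = 0 \<Longrightarrow> Orbs = {}"
    using card_orbit_of_eq_period pos by (fastforce simp: Orbs_def)
  moreover have "cycle_type f S L = card Orbs"
    by (simp add: cycle_type_def Orbs_def)
  ultimately show ?thesis
    by (metis card.empty div_by_0 nonzero_mult_div_cancel_left)
qed

end

section \<open>Counting cycles layer by layer\<close>

lemma monom_of_Nil [simp]: "monom_of [] i = 0"
  by (simp add: monom_of_def)

lemma monom_of_Cons [simp]: "monom_of ((j, e) # xs) i = (if j = i then e else 0) + monom_of xs i"
  by (simp add: monom_of_def)

lemma monom_of_append [simp]: "monom_of (xs @ ys) i = monom_of xs i + monom_of ys i"
  by (simp add: monom_of_def)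

lemma monom_of_map_inj:
  assumes "distinct xs" "inj_on h (set xs)"
  shows "monom_of (map (\<lambda>s. (h s, e)) xs) i = (if i \<in> h ` set xs then e else 0)"
  using assms by (induction xs) auto

lemma monom_of_geometric_tail:
  assumes "1 < q" "0 < m"
  shows "monom_of ([(1, A), (m, B)] @ [(m * q ^ s, C). s \<leftarrow> [i..<j]]) L
       = (if 1 = L then A else 0) + (if m = L then B else 0)
         + (if L \<in> (\<lambda>s. m * q ^ s) ` {i..<j} then C else 0)"
proof -
  have "inj_on (\<lambda>s. m * q ^ s) {i..<j}"
    using assms by (intro inj_onI) simp
  then show ?thesis
    using monom_of_map_inj[OF distinct_upt, of "\<lambda>s. m * q ^ s" i j C L]
    by (simp only: set_upt monom_of_append monom_of_Cons monom_of_Nil add_0_right)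
qed

text \<open>Here \<open>g (depth x)\<close> stands for the period of \<open>x\<close>, so that \<open>card {x \<in> S. g (depth x) = L} div L\<close>
  counts the cycles of length \<open>L\<close>.\<close>

context
  fixes S :: "'a set" and depth :: "'a \<Rightarrow> nat" and g :: "nat \<Rightarrow> nat" and q m c K t :: nat
  assumes q: "1 < q" and m: "1 < m" and c: "1 \<le> c" "c \<le> K"
    and depth_le: "\<And>x. x \<in> S \<Longrightarrow> depth x \<le> K"
    and card_depth_le: "\<And>i. i \<le> K \<Longrightarrow> card {x \<in> S. depth x \<le> i} = q ^ (t + i)"
    and g: "\<And>j. j \<le> K \<Longrightarrow> g j = (if j = 0 then 1 else m * q ^ (j - c))"
begin

lemma finite_layers: "finite S"
proof -
  have "{x \<in> S. depth x \<le> K} = S"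
    using depth_le by auto
  then have "0 < card S"
    using card_depth_le[of K] q by simp
  then show ?thesis
    by (rule card_ge_0_finite)
qed

lemma card_depth_between:
  assumes "i \<le> j" "j \<le> K"
  shows "card {x \<in> S. i < depth x \<and> depth x \<le> j} = q ^ (t + j) - q ^ (t + i)"
proof -
  have "{x \<in> S. i < depth x \<and> depth x \<le> j} = {x \<in> S. depth x \<le> j} - {x \<in> S. depth x \<le> i}"
    by auto
  moreover have "{x \<in> S. depth x \<le> i} \<subseteq> {x \<in> S. depth x \<le> j}"
    using assms by auto
  ultimately show ?thesis
    using finite_layers assms card_depth_le[of i] card_depth_le[of j] by (simp add: card_Diff_subset)
qed

lemma card_period_1: "card {x \<in> S. g (depth x) = 1} = q ^ t"
proof -
  have "g d = 1 \<longleftrightarrow> d = 0" if "d \<le> K" for d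
    using g[OF that] m q by (simp add: less_imp_le_nat one_less_mult)
  then have "{x \<in> S. g (depth x) = 1} = {x \<in> S. depth x \<le> 0}"
    using depth_le by auto
  then show ?thesis
    using card_depth_le[of 0] by simp
qed

lemma card_period_m: "card {x \<in> S. g (depth x) = m} = q ^ (t + c) - q ^ t"
proof -
  have "g d = m \<longleftrightarrow> 0 < d \<and> d \<le> c" if "d \<le> K" for d
    using g[OF that] m q by auto
  then have "{x \<in> S. g (depth x) = m} = {x \<in> S. 0 < depth x \<and> depth x \<le> c}"
    using depth_le by auto
  then show ?thesis
    using card_depth_between[of 0 c] c by simp
qed

lemma card_period_m_mult_power:
  assumes s: "1 \<le> s" "s \<le> K - c"
  shows "card {x \<in> S. g (depth x) = m * q ^ s} = q ^ s * (q ^ (t + c - 1) * (q - 1))"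
proof -
  have "m < m * q ^ s"
    using m one_less_power[OF q, of s] s by simp
  then have "g d = m * q ^ s \<longleftrightarrow> c + s - 1 < d \<and> d \<le> c + s" if "d \<le> K" for d
    using g[OF that] m q s c by auto
  then have "{x \<in> S. g (depth x) = m * q ^ s} = {x \<in> S. c + s - 1 < depth x \<and> depth x \<le> c + s}"
    using depth_le by blast
  also have "card \<dots> = q ^ Suc (s + (t + c - 1)) - q ^ (s + (t + c - 1))"
    using card_depth_between[of "c + s - 1" "c + s"] s c by (simp add: Suc_diff_le ac_simps)
  also have "\<dots> = q ^ s * (q ^ (t + c - 1) * (q - 1))"
    by (simp add: diff_mult_distrib power_add algebra_simps)
  finally show ?thesis .
qed

lemma period_not_in_range:
  assumes "L \<noteq> 1" "L \<noteq> m" "L \<notin> (\<lambda>s. m * q ^ s) ` {1..<K - c + 1}" "x \<in> S"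
  shows "g (depth x) \<noteq> L"
proof (cases "depth x \<le> c")
  case True
  then show ?thesis
    using assms(1,2) g[OF depth_le[OF assms(4)]] by auto
next
  case False
  then have "depth x - c \<in> {1..<K - c + 1}"
    using depth_le[OF assms(4)] by auto
  then show ?thesis
    using assms(3) g[OF depth_le[OF assms(4)]] False by auto
qed

lemma card_layers_div_eq_monom_of:
  "card {x \<in> S. g (depth x) = L} div L
     = monom_of ([(1, q ^ t), (m, (q ^ (t + c) - q ^ t) div m)] @
         [(m * q ^ s, q ^ (t + c - 1) * (q - 1) div m). s \<leftarrow> [1..<K - c + 1]]) L"
proof -
  have mq: "m < m * q ^ s" if "1 \<le> s" for s
    using m one_less_power[OF q, of s] that by simp
  have M: "monom_of ([(1, q ^ t), (m, (q ^ (t + c) - q ^ t) div m)] @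
         [(m * q ^ s, q ^ (t + c - 1) * (q - 1) div m). s \<leftarrow> [1..<K - c + 1]]) L
      = (if 1 = L then q ^ t else 0) + (if m = L then (q ^ (t + c) - q ^ t) div m else 0)
        + (if L \<in> (\<lambda>s. m * q ^ s) ` {1..<K - c + 1} then q ^ (t + c - 1) * (q - 1) div m else 0)"
    using q m by (intro monom_of_geometric_tail) simp_all
  consider (one) "L = 1" | (base) "L = m" | (high) s where "s \<in> {1..<K - c + 1}" "L = m * q ^ s"
    | (none) "L \<noteq> 1" "L \<noteq> m" "L \<notin> (\<lambda>s. m * q ^ s) ` {1..<K - c + 1}"
    by blast
  then show ?thesis
  proof cases
    case one
    moreover have "L \<notin> (\<lambda>s. m * q ^ s) ` {1..<K - c + 1}"
      using one m mq by fastforce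
    ultimately show ?thesis
      unfolding M using m card_period_1 by simp
  next
    case base
    moreover have "L \<notin> (\<lambda>s. m * q ^ s) ` {1..<K - c + 1}"
      using base mq by fastforce
    ultimately show ?thesis
      unfolding M using m card_period_m by simp
  next
    case high
    then have s: "1 \<le> s" "s \<le> K - c"
      by auto
    then have "card {x \<in> S. g (depth x) = L} div L = q ^ (t + c - 1) * (q - 1) div m"
      using card_period_m_mult_power[OF s] high(2) q by (simp add: mult.commute[of m])
    moreover have "L \<in> (\<lambda>s. m * q ^ s) ` {1..<K - c + 1}" "1 \<noteq> L" "m \<noteq> L"
      using high m mq[OF s(1)] by auto
    ultimately show ?thesis
      unfolding M by simp
  next
    case none
    then have empty: "{x \<in> S. g (depth x) = L} = {}"
      using period_not_in_range by blast
    show ?thesis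
      unfolding M empty using none by auto
  qed
qed

end

section \<open>Cycle types of affine maps\<close>

lemma affine_map_less: "0 < m \<Longrightarrow> affine_map m a b x < m"
  by (simp add: affine_map_def nat_less_iff)

lemma affine_map_cong: "[a = a'] (mod int m) \<Longrightarrow> affine_map m a b = affine_map m a' b"
  unfolding affine_map_def cong_def by (metis mod_add_left_eq mod_mult_left_eq)

lemma affine_map_funpow:
  assumes "x < m"
  shows "int ((affine_map m a b ^^ n) x) = (a ^ n * int x + b * geom_sum a n) mod int m"
proof (induction n)
  case 0
  then show ?case
    using assms by simp
next
  case (Suc n)
  have "int ((affine_map m a b ^^ Suc n) x) = (a * int ((affine_map m a b ^^ n) x) + b) mod int m"
    using assms by (simp add: affine_map_def)
  also have "\<dots> = (a * (a ^ n * int x + b * geom_sum a n) + b) mod int m"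
    by (metis Suc.IH mod_add_left_eq mod_mult_right_eq)
  also have "a * (a ^ n * int x + b * geom_sum a n) + b = a ^ Suc n * int x + b * geom_sum a (Suc n)"
    using geom_sum_add[of a 1 n] by (simp add: geom_sum_def algebra_simps)
  finally show ?case .
qed

lemma affine_map_funpow_eq_self_iff:
  assumes "x < m"
  shows "(affine_map m a b ^^ n) x = x \<longleftrightarrow> int m dvd geom_sum a n * ((a - 1) * int x + b)"
proof -
  have an: "a ^ n = (a - 1) * geom_sum a n + 1"
    using power_diff_1_eq_geom_sum[of a n] by (simp add: algebra_simps)
  have "(affine_map m a b ^^ n) x = x \<longleftrightarrow> int ((affine_map m a b ^^ n) x) = int x"
    by (rule of_nat_eq_iff[symmetric])
  also have "\<dots> \<longleftrightarrow> (a ^ n * int x + b * geom_sum a n) mod int m = int x mod int m"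
    using assms by (simp add: affine_map_funpow)
  also have "\<dots> \<longleftrightarrow> int m dvd (a ^ n * int x + b * geom_sum a n) - int x"
    by (rule mod_eq_dvd_iff)
  also have "(a ^ n * int x + b * geom_sum a n) - int x = geom_sum a n * ((a - 1) * int x + b)"
    unfolding an by (simp add: algebra_simps)
  finally show ?thesis .
qed

lemma cycle_type_affine_map:
  assumes p: "prime p" and g_pos: "\<And>j. j \<le> k \<Longrightarrow> 0 < g j"
    and period: "\<And>j n. j \<le> k \<Longrightarrow> int p ^ j dvd geom_sum a n \<longleftrightarrow> g j dvd n"
  shows "cycle_type (affine_map (p ^ k) a b) {0..<p ^ k} L
       = card {x \<in> {0..<p ^ k}. g (k - nu_trunc p k ((a - 1) * int x + b)) = L} div L"
proof (rule cycle_type_eq_card_div)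
  fix x n assume "x \<in> {0..<p ^ k}"
  then have "(affine_map (p ^ k) a b ^^ n) x = x
      \<longleftrightarrow> int p ^ k dvd geom_sum a n * ((a - 1) * int x + b)"
    by (simp add: affine_map_funpow_eq_self_iff)
  also have "\<dots> \<longleftrightarrow> int p ^ (k - nu_trunc p k ((a - 1) * int x + b)) dvd geom_sum a n"
    by (rule pow_dvd_mult_iff_nu_trunc[OF p order_refl])
  finally show "(affine_map (p ^ k) a b ^^ n) x = x
      \<longleftrightarrow> g (k - nu_trunc p k ((a - 1) * int x + b)) dvd n"
    by (simp add: period)
qed (use p g_pos in \<open>simp_all add: affine_map_less prime_gt_0_nat\<close>)

lemma cycle_type_affine_map_const:
  assumes p: "prime p" and g_pos: "\<And>j. j \<le> k \<Longrightarrow> 0 < g j"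
    and period: "\<And>j n. j \<le> k \<Longrightarrow> int p ^ j dvd geom_sum a n \<longleftrightarrow> g j dvd n"
    and const: "\<And>x. x < p ^ k \<Longrightarrow> nu_trunc p k ((a - 1) * int x + b) = s"
  shows "cycle_type (affine_map (p ^ k) a b) {0..<p ^ k} = monom_of [(g (k - s), p ^ k div g (k - s))]"
proof
  fix L
  have "{x \<in> {0..<p ^ k}. g (k - nu_trunc p k ((a - 1) * int x + b)) = L}
      = (if g (k - s) = L then {0..<p ^ k} else {})"
    using const by auto
  then show "cycle_type (affine_map (p ^ k) a b) {0..<p ^ k} L = monom_of [(g (k - s), p ^ k div g (k - s))] L"
    by (simp add: cycle_type_affine_map[OF p g_pos period])
qed

lemma cycle_type_affine_map_layered:
  assumes p: "prime p" and g_pos: "\<And>j. j \<le> k \<Longrightarrow> 0 < g j"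
    and period: "\<And>j n. j \<le> k \<Longrightarrow> int p ^ j dvd geom_sum a n \<longleftrightarrow> g j dvd n"
    and t: "nu_trunc p k (a - 1) = t" and b: "int p ^ t dvd b"
    and m: "1 < m" and c: "1 \<le> c" "c \<le> k - t"
    and g: "\<And>j. 1 \<le> j \<Longrightarrow> j \<le> k - t \<Longrightarrow> g j = m * p ^ (j - c)"
  shows "cycle_type (affine_map (p ^ k) a b) {0..<p ^ k}
       = monom_of ([(1, p ^ t), (m, (p ^ (t + c) - p ^ t) div m)] @
           [(m * p ^ s, p ^ (t + c - 1) * (p - 1) div m). s \<leftarrow> [1..<k - t - c + 1]])"
proof
  fix L
  define v where "v x = nu_trunc p k ((a - 1) * int x + b)" for x
  have t_le: "t \<le> k"
    using t nu_trunc_le by metis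
  have v_ge: "t \<le> v x" for x
  proof -
    have "int p ^ t dvd a - 1"
      using pow_dvd_iff_le_nu_trunc[OF p t_le] t by simp
    then have "int p ^ t dvd (a - 1) * int x + b"
      using b by simp
    then show ?thesis
      using pow_dvd_iff_le_nu_trunc[OF p t_le] by (simp add: v_def)
  qed
  have card_depth_le: "card {x \<in> {0..<p ^ k}. k - v x \<le> i} = p ^ (t + i)" if "i \<le> k - t" for i
  proof -
    have "{x \<in> {0..<p ^ k}. k - v x \<le> i} = {x \<in> {0..<p ^ k}. k - i \<le> v x}"
      using nu_trunc_le that by (auto simp: v_def)
    then show ?thesis
      using card_nu_trunc_linear_ge[OF p t b, of "k - i"] that t_le by (simp add: v_def)
  qed
  have g0: "g 0 = 1"
    using period[of 0 1] by simp
  have "cycle_type (affine_map (p ^ k) a b) {0..<p ^ k} L = card {x \<in> {0..<p ^ k}. g (k - v x) = L} div L"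
    unfolding v_def by (rule cycle_type_affine_map[OF p g_pos period])
  also have "\<dots> = monom_of ([(1, p ^ t), (m, (p ^ (t + c) - p ^ t) div m)] @
           [(m * p ^ s, p ^ (t + c - 1) * (p - 1) div m). s \<leftarrow> [1..<k - t - c + 1]]) L"
    using prime_gt_1_nat[OF p] m c card_depth_le g g0 v_ge
    by (intro card_layers_div_eq_monom_of) (auto simp: diff_le_mono2)
  finally show "cycle_type (affine_map (p ^ k) a b) {0..<p ^ k} L = \<dots>" .
qed

section \<open>Multipliers congruent to 1\<close>

lemma nu_trunc_le_mult:
  assumes p: "prime p"
  shows "nu_trunc p k m \<le> nu_trunc p k (m * n)"
proof -
  have "int p ^ nu_trunc p k m dvd m"
    using pow_dvd_iff_le_nu_trunc[OF p nu_trunc_le[of p k m], where n = m] by simp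
  then have "int p ^ nu_trunc p k m dvd m * n"
    by (rule dvd_mult2)
  then show ?thesis
    using pow_dvd_iff_le_nu_trunc[OF p nu_trunc_le[of p k m], where n = "m * n"] by simp
qed

lemma cycle_type_affine_map_unipotent_small_nu_b:
  assumes p: "prime p" and a: "[a = 1] (mod int p)" and a4: "p = 2 \<Longrightarrow> [a = 1] (mod 4)"
    and less: "nu_trunc p k b < nu_trunc p k (a - 1)"
  shows "cycle_type (affine_map (p ^ k) a b) {0..<p ^ k}
       = monom_of [(aord (p ^ k) b, p ^ k div aord (p ^ k) b)]"
proof -
  have "nu_trunc p k ((a - 1) * int x + b) = nu_trunc p k b" for x
    using less nu_trunc_le_mult[OF p, of k "a - 1" "int x"] by (intro nu_trunc_add_eq_left[OF p]) simp
  then show ?thesis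
    using p pow_dvd_geom_sum_iff[OF p a a4]
    by (subst cycle_type_affine_map_const[where g = "\<lambda>j. p ^ j"])
      (simp_all add: prime_gt_0_nat aord_prime_power)
qed

lemma cycle_type_affine_map_translation:
  assumes p: "prime p"
  shows "cycle_type (affine_map (p ^ k) 1 b) {0..<p ^ k} = monom_of [(aord (p ^ k) b, p ^ k div aord (p ^ k) b)]"
  using p pow_dvd_geom_sum_iff[OF p, of 1]
  by (subst cycle_type_affine_map_const[where g = "\<lambda>j. p ^ j" and s = "nu_trunc p k b"])
    (simp_all add: prime_gt_0_nat aord_prime_power)

lemma cycle_type_affine_map_unipotent_large_nu_b:
  assumes p: "prime p" and a: "[a = 1] (mod int p)" and a4: "p = 2 \<Longrightarrow> [a = 1] (mod 4)"
    and t: "nu_trunc p k (a - 1) = t" "1 \<le> t" and le: "t \<le> nu_trunc p k b"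
  shows "cycle_type (affine_map (p ^ k) a b) {0..<p ^ k}
       = monom_of ([(1, p ^ t)] @ [(p ^ s, p ^ (t - 1) * (p - 1)). s \<leftarrow> [1..<k - t + 1]])"
proof -
  have t_le: "t \<le> k"
    using t nu_trunc_le by metis
  have b: "int p ^ t dvd b"
    using le pow_dvd_iff_le_nu_trunc[OF p t_le] by simp
  have period: "int p ^ j dvd geom_sum a n \<longleftrightarrow> p ^ j dvd n" for j n
    using pow_dvd_geom_sum_iff[OF p a a4] .
  show ?thesis
  proof (cases "t = k")
    case True
    then have "[a = 1] (mod int (p ^ k))"
      using pow_dvd_iff_le_nu_trunc[OF p order_refl] t by (simp add: cong_iff_dvd_diff)
    moreover have "aord (p ^ k) b = 1"
      using le True nu_trunc_le[of p k b] by (simp add: aord_prime_power[OF p])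
    ultimately show ?thesis
      using cycle_type_affine_map_translation[OF p, of k b] True by (simp add: affine_map_cong)
  next
    case False
    have "cycle_type (affine_map (p ^ k) a b) {0..<p ^ k}
       = monom_of ([(1, p ^ t), (p, (p ^ (t + 1) - p ^ t) div p)] @
           [(p * p ^ s, p ^ (t + 1 - 1) * (p - 1) div p). s \<leftarrow> [1..<k - t - 1 + 1]])"
    proof (rule cycle_type_affine_map_layered[OF p _ period t(1) b])
      show "p ^ j = p * p ^ (j - 1)" if "1 \<le> j" for j
        using that by (simp flip: power_Suc)
    qed (use p prime_gt_1_nat[OF p] False t_le in \<open>simp_all add: prime_gt_0_nat\<close>)
    also have "[(1, p ^ t), (p, (p ^ (t + 1) - p ^ t) div p)] @
           [(p * p ^ s, p ^ (t + 1 - 1) * (p - 1) div p). s \<leftarrow> [1..<k - t - 1 + 1]]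
        = [(1, p ^ t)] @ [(p ^ s, p ^ (t - 1) * (p - 1)). s \<leftarrow> [1..<k - t + 1]]"
    proof -
      have "[1..<k - t + 1] = 1 # map Suc [1..<k - t - 1 + 1]"
        using False t_le by (simp add: map_Suc_upt upt_conv_Cons Suc_diff_Suc del: upt_Suc)
      moreover obtain t' where t': "t = Suc t'"
        using t(2) by (metis Suc_le_D One_nat_def)
      then have "p ^ (t + 1) - p ^ t = p * (p ^ t' * (p - 1))"
        "p ^ (t + 1 - 1) * (p - 1) = p * (p ^ t' * (p - 1))"
        by (simp_all add: diff_mult_distrib2 algebra_simps)
      ultimately show ?thesis
        using prime_gt_0_nat[OF p] t' by (simp del: upt_Suc)
    qed
    finally show ?thesis .
  qed
qed

section \<open>Multipliers not congruent to 1\<close>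

lemma cong_pow_nat_mod_one_iff:
  assumes "0 < m" "d dvd m"
  shows "[nat (a mod int m) ^ n = 1] (mod d) \<longleftrightarrow> int d dvd a ^ n - 1"
proof -
  have "[int (nat (a mod int m)) = a] (mod int m)"
    using assms(1) by (simp add: cong_def)
  then have "[int (nat (a mod int m)) ^ n = a ^ n] (mod int d)"
    using assms(2) cong_dvd_modulus cong_pow by (metis of_nat_dvd_iff)
  then have "[nat (a mod int m) ^ n = 1] (mod d) \<longleftrightarrow> [a ^ n = 1] (mod int d)"
    by (metis cong_int_iff cong_sym cong_trans of_nat_1 of_nat_power)
  then show ?thesis
    by (simp add: cong_iff_dvd_diff)
qed

lemma ord_nat_mod_eqI:
  assumes "0 < m" "\<And>n. int m dvd a ^ n - 1 \<longleftrightarrow> e dvd n"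
  shows "ord m (nat (a mod int m)) = e"
proof -
  have dvd_iff: "ord m (nat (a mod int m)) dvd n \<longleftrightarrow> e dvd n" for n
    using cong_pow_nat_mod_one_iff[OF assms(1) dvd_refl, of a n] assms(2)
    by (simp add: ord_divides')
  show ?thesis
    using dvd_iff[of "ord m (nat (a mod int m))"] dvd_iff[of e] by (simp add: dvd_antisym)
qed

lemma ord_mod_prime:
  assumes p: "prime p" and a: "\<not> int p dvd a"
  obtains d where "0 < d" "\<not> p dvd d" "\<And>n. int p dvd a ^ n - 1 \<longleftrightarrow> d dvd n"
proof -
  define A where "A = nat (a mod int p)"
  have p0: "0 < p"
    using p by (simp add: prime_gt_0_nat)
  have dvd_iff: "int p dvd a ^ n - 1 \<longleftrightarrow> ord p A dvd n" for n
    using cong_pow_nat_mod_one_iff[OF p0 dvd_refl, of a n] ord_divides'[of A n p] by (simp add: A_def)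
  have "int A = a mod int p"
    using p0 by (simp add: A_def)
  then have "\<not> p dvd A"
    using a by (metis dvd_mod_iff dvd_refl of_nat_dvd_iff)
  then have "[A ^ (p - 1) = 1] (mod p)"
    by (rule fermat_theorem[OF p])
  then have "ord p A dvd p - 1"
    by (simp add: ord_divides')
  then have "0 < ord p A" "ord p A < p"
    using prime_gt_1_nat[OF p] prime_imp_coprime[OF p \<open>\<not> p dvd A\<close>] by (auto dest: dvd_imp_le)
  then have "\<not> p dvd ord p A"
    by (auto dest: dvd_imp_le)
  then show ?thesis
    using that[of "ord p A"] dvd_iff \<open>0 < ord p A\<close> by blast
qed

text \<open>If \<open>a\<close> is not \<open>1\<close> modulo \<open>p\<close>, let \<open>d\<close> be the order of \<open>a\<close> modulo \<open>p\<close>; lifting the exponent for \<open>a ^ d\<close>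
  shows that the order of \<open>a\<close> modulo \<open>p ^ i\<close> is \<open>d * p ^ (i - c)\<close> for a fixed \<open>c \<ge> 1\<close>.\<close>

lemma order_data_nonunipotent:
  assumes p: "prime p" and k: "1 \<le> k" and a: "\<not> int p dvd a" "\<not> int p dvd a - 1"
  obtains d c where "1 < d" "\<not> p dvd d" "1 \<le> c" "c \<le> k"
    "\<And>i n. 1 \<le> i \<Longrightarrow> i \<le> k \<Longrightarrow> int p ^ i dvd a ^ n - 1 \<longleftrightarrow> d * p ^ (i - c) dvd n"
proof -
  obtain d where "0 < d" "\<not> p dvd d" and d_dvd_iff: "\<And>n. int p dvd a ^ n - 1 \<longleftrightarrow> d dvd n"
    using ord_mod_prime[OF p a(1)] by blast
  have "d \<noteq> 1"
    using d_dvd_iff[of 1] a(2) by auto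
  define u where "u = a ^ d"
  have u: "[u = 1] (mod int p)"
    using d_dvd_iff[of d] by (simp add: u_def cong_iff_dvd_diff)
  have "p \<noteq> 2"
  proof
    assume "p = 2"
    then have "odd a" "odd (a - 1)"
      using a by simp_all
    then show False
      by simp
  qed
  define c where "c = nu_trunc p k (u - 1)"
  have "1 \<le> c"
    using pow_dvd_iff_le_nu_trunc[OF p k, of "u - 1"] u by (simp add: c_def cong_iff_dvd_diff)
  have key: "int p ^ i dvd a ^ n - 1 \<longleftrightarrow> d * p ^ (i - c) dvd n" if i: "1 \<le> i" "i \<le> k" for i n
  proof (cases "d dvd n")
    case True
    then obtain q where q: "n = d * q" ..
    have "a ^ n - 1 = geom_sum u q * (u - 1)"
      using power_diff_1_eq_geom_sum[of u q] by (simp add: q u_def power_mult)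
    then have "int p ^ i dvd a ^ n - 1 \<longleftrightarrow> int p ^ (i - c) dvd geom_sum u q"
      using pow_dvd_mult_iff_nu_trunc[OF p i(2)] by (simp add: c_def)
    also have "\<dots> \<longleftrightarrow> p ^ (i - c) dvd q"
      using pow_dvd_geom_sum_iff[OF p u] \<open>p \<noteq> 2\<close> by simp
    also have "\<dots> \<longleftrightarrow> d * p ^ (i - c) dvd n"
      using \<open>0 < d\<close> by (simp add: q)
    finally show ?thesis .
  next
    case False
    have "\<not> int p dvd a ^ n - 1"
      using False d_dvd_iff by simp
    then have "\<not> int p ^ i dvd a ^ n - 1"
      using i dvd_trans[of "int p" "int p ^ i"] by auto
    moreover have "\<not> d * p ^ (i - c) dvd n"
      using False dvd_mult_left by blast
    ultimately show ?thesis
      by simp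
  qed
  show ?thesis
  proof (rule that[of d c])
    show "1 < d"
      using \<open>0 < d\<close> \<open>d \<noteq> 1\<close> by simp
    show "c \<le> k"
      by (simp add: c_def nu_trunc_le)
  qed (use \<open>\<not> p dvd d\<close> \<open>1 \<le> c\<close> key in auto)
qed

lemma cycle_type_affine_map_nonunipotent:
  assumes p: "prime p" and k: "1 \<le> k" and a: "\<not> int p dvd a" "\<not> [a = 1] (mod int p)"
  defines "ordA \<equiv> ord (p ^ k) (nat (a mod int (p ^ k)))"
  shows "let o' = p_prime_part p ordA; w = multiplicity p ordA in
         cycle_type (affine_map (p ^ k) a b) {0..<p ^ k}
       = monom_of ([(1, 1), (o', (p ^ (k - w) - 1) div o')] @
           [(o' * p ^ s, p ^ (k - 1 - w) * (p - 1) div o'). s \<leftarrow> [1..<w + 1]])"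
proof -
  have a1: "\<not> int p dvd a - 1"
    using a(2) by (simp add: cong_iff_dvd_diff)
  obtain d c where d: "1 < d" "\<not> p dvd d" and c: "1 \<le> c" "c \<le> k"
    and key: "\<And>i n. 1 \<le> i \<Longrightarrow> i \<le> k \<Longrightarrow> int p ^ i dvd a ^ n - 1 \<longleftrightarrow> d * p ^ (i - c) dvd n"
    using order_data_nonunipotent[OF p k a(1) a1] by blast
  have p0: "0 < p"
    using p by (simp add: prime_gt_0_nat)
  have ord: "ordA = d * p ^ (k - c)"
    unfolding ordA_def using p0 key[OF k order_refl] by (intro ord_nat_mod_eqI) simp_all
  have w: "multiplicity p ordA = k - c"
    using d p by (simp add: ord multiplicity_prime_elem_times_other prime_imp_prime_elem)
  have o': "p_prime_part p ordA = d"
    unfolding p_prime_part_def w using p0 by (simp add: ord)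
  define g where "g j = (if j = 0 then 1 else d * p ^ (j - c))" for j
  have period: "int p ^ j dvd geom_sum a n \<longleftrightarrow> g j dvd n" if "j \<le> k" for j n
  proof (cases "j = 0")
    case False
    have "coprime (int p ^ j) (a - 1)"
      using a1 p by (simp add: prime_imp_coprime)
    then have "int p ^ j dvd geom_sum a n \<longleftrightarrow> int p ^ j dvd (a - 1) * geom_sum a n"
      by (simp add: coprime_dvd_mult_right_iff)
    also have "\<dots> \<longleftrightarrow> g j dvd n"
      using key[of j n] False that by (simp add: g_def flip: power_diff_1_eq_geom_sum)
    finally show ?thesis .
  qed (simp add: g_def)
  have t: "nu_trunc p k (a - 1) = 0"
    using pow_dvd_iff_le_nu_trunc[OF p k, of "a - 1"] a1 by simp
  have "cycle_type (affine_map (p ^ k) a b) {0..<p ^ k}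
       = monom_of ([(1, p ^ 0), (d, (p ^ (0 + c) - p ^ 0) div d)] @
           [(d * p ^ s, p ^ (0 + c - 1) * (p - 1) div d). s \<leftarrow> [1..<k - 0 - c + 1]])"
    by (rule cycle_type_affine_map_layered[OF p _ period t])
      (use d c p0 in \<open>simp_all add: g_def\<close>)
  then show ?thesis
    using c by (simp add: Let_def o' w)
qed

section \<open>The prime 2\<close>

lemma nu_trunc_odd: "odd n \<Longrightarrow> nu_trunc 2 k n = 0"
  using pow_dvd_iff_le_nu_trunc[of 2 1 k n] by (cases "k = 0") (simp_all add: nu_trunc_def)

lemma nu_trunc_3_mod_4:
  assumes a: "[a = 3] (mod 4)" and k: "2 \<le> k"
  shows "nu_trunc 2 k (a - 1) = 1" "2 \<le> nu_trunc 2 k (a + 1)"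
proof -
  obtain h where h: "a = 4 * h + 3"
    using a by (metis cong_iff_dvd_diff dvdE eq_diff_eq)
  show "nu_trunc 2 k (a - 1) = 1"
  proof (rule nu_trunc_eqI)
    show "int 2 ^ j dvd a - 1 \<longleftrightarrow> j \<le> 1" for j
    proof -
      have "a - 1 = 2 * (2 * h + 1)"
        by (simp add: h)
      then have "\<not> 4 dvd a - 1"
        by presburger
      then have "\<not> int 2 ^ j dvd a - 1" if "2 \<le> j"
        using that dvd_trans[OF le_imp_power_dvd[of 2 j "int 2"]] by fastforce
      moreover have "int 2 ^ j dvd a - 1" if "j \<le> 1"
        using that by (cases j) (auto simp: h)
      ultimately show ?thesis
        by fastforce
    qed
  qed (use k in simp_all)
  have "int 2 ^ 2 dvd a + 1"
    by (simp add: h)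
  then show "2 \<le> nu_trunc 2 k (a + 1)"
    using pow_dvd_iff_le_nu_trunc[of 2 2 k] k by simp
qed

lemma pow_dvd_geom_sum_iff_3_mod_4:
  assumes a: "[a = 3] (mod 4)" and j: "1 \<le> j" "j \<le> k"
  shows "int 2 ^ j dvd geom_sum a n \<longleftrightarrow> 2 ^ Suc (j - nu_trunc 2 k (a + 1)) dvd n"
proof (cases "even n")
  case True
  then obtain q where n: "n = 2 * q" ..
  obtain h where h: "a = 4 * h + 3"
    using a by (metis cong_iff_dvd_diff dvdE eq_diff_eq)
  have "a\<^sup>2 - 1 = 4 * (4 * h\<^sup>2 + 6 * h + 2)"
    by (simp add: h power2_eq_square algebra_simps)
  then have a2: "[a\<^sup>2 = 1] (mod 4)"
    by (simp add: cong_iff_dvd_diff)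
  then have "[a\<^sup>2 = 1] (mod int 2)"
    by (rule cong_dvd_modulus) simp
  have "geom_sum a 2 = a + 1"
    by (simp add: geom_sum_def numeral_2_eq_2)
  then have "geom_sum a n = geom_sum (a\<^sup>2) q * (a + 1)"
    using geom_sum_mult[of a q 2] by (simp add: n mult.commute)
  then have "int 2 ^ j dvd geom_sum a n \<longleftrightarrow> int 2 ^ (j - nu_trunc 2 k (a + 1)) dvd geom_sum (a\<^sup>2) q"
    using pow_dvd_mult_iff_nu_trunc[of 2 j k] j by simp
  also have "\<dots> \<longleftrightarrow> 2 ^ (j - nu_trunc 2 k (a + 1)) dvd q"
    using pow_dvd_geom_sum_iff[of 2 "a\<^sup>2"] \<open>[a\<^sup>2 = 1] (mod int 2)\<close> a2 by simp
  also have "\<dots> \<longleftrightarrow> 2 ^ Suc (j - nu_trunc 2 k (a + 1)) dvd n"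
    by (simp add: n)
  finally show ?thesis .
next
  case False
  have "[a = 1] (mod int 2)"
    using a cong_dvd_modulus[of a 3 4 "int 2"] by (simp add: cong_def)
  then have "[geom_sum a n = int n] (mod int 2)"
    by (rule geom_sum_cong_of_nat)
  then have "odd (geom_sum a n)"
    using False by (simp add: cong_iff_dvd_diff)
  then have "\<not> int 2 ^ j dvd geom_sum a n"
    using j dvd_trans[of 2 "int 2 ^ j" "geom_sum a n"] by auto
  moreover have "\<not> 2 ^ Suc (j - nu_trunc 2 k (a + 1)) dvd n"
    using False by auto
  ultimately show ?thesis
    by simp
qed

lemma cycle_type_affine_map_3_mod_4_odd:
  assumes a: "[a = 3] (mod 4)" and k: "1 \<le> k" and b: "odd b"
  defines "r \<equiv> nu_trunc 2 k (a + 1)"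
  shows "cycle_type (affine_map (2 ^ k) a b) {0..<2 ^ k} = monom_of [(2 ^ Suc (k - r), 2 ^ k div 2 ^ Suc (k - r))]"
proof -
  define g :: "nat \<Rightarrow> nat" where "g j = (if j = 0 then 1 else 2 ^ Suc (j - r))" for j
  obtain h where "a = 4 * h + 3"
    using a by (metis cong_iff_dvd_diff dvdE eq_diff_eq)
  then have "odd a"
    by presburger
  then have "nu_trunc 2 k ((a - 1) * int x + b) = 0" for x
    using b by (intro nu_trunc_odd) simp
  then have "cycle_type (affine_map (2 ^ k) a b) {0..<2 ^ k} = monom_of [(g (k - 0), 2 ^ k div g (k - 0))]"
    using pow_dvd_geom_sum_iff_3_mod_4[OF a]
    by (intro cycle_type_affine_map_const[of 2 k g]) (simp_all add: g_def r_def)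
  then show ?thesis
    using k by (simp add: g_def)
qed

lemma cycle_type_affine_map_3_mod_4_even:
  assumes a: "[a = 3] (mod 4)" and k: "2 \<le> k" and b: "even b"
  defines "R \<equiv> min (nu_trunc 2 k (a + 1)) (k - 1)"
  shows "cycle_type (affine_map (2 ^ k) a b) {0..<2 ^ k}
       = monom_of ([(1, 2), (2, 2 ^ R - 1)] @ [(2 ^ s, 2 ^ (R - 1)). s \<leftarrow> [2..<k - R + 1]])"
proof -
  define r where "r = nu_trunc 2 k (a + 1)"
  define g :: "nat \<Rightarrow> nat" where "g j = (if j = 0 then 1 else 2 ^ Suc (j - r))" for j
  have R: "1 \<le> R" "R \<le> k - 1"
    using nu_trunc_3_mod_4(2)[OF a k] k by (simp_all add: R_def)
  have g: "g j = 2 * 2 ^ (j - R)" if "1 \<le> j" "j \<le> k - 1" for j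
    using that by (simp add: g_def R_def r_def)
  have "cycle_type (affine_map (2 ^ k) a b) {0..<2 ^ k}
       = monom_of ([(1, 2 ^ 1), (2, (2 ^ (1 + R) - 2 ^ 1) div 2)] @
           [(2 * 2 ^ s, 2 ^ (1 + R - 1) * (2 - 1) div 2). s \<leftarrow> [1..<k - 1 - R + 1]])"
    using pow_dvd_geom_sum_iff_3_mod_4[OF a] nu_trunc_3_mod_4(1)[OF a k] b R g
    by (intro cycle_type_affine_map_layered[of 2 k g]) (auto simp: g_def r_def)
  also have "[((2::nat) * 2 ^ s, (2::nat) ^ (1 + R - 1) * (2 - 1) div 2). s \<leftarrow> [1..<k - 1 - R + 1]]
      = [(2 ^ s, 2 ^ (R - 1)). s \<leftarrow> [2..<k - R + 1]]"
  proof -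
    have "[2..<k - R + 1] = map Suc [1..<k - 1 - R + 1]"
      using R by (simp add: map_Suc_upt Suc_diff_Suc numeral_2_eq_2 del: upt_Suc)
    moreover have "(2::nat) ^ R div 2 = 2 ^ (R - 1)"
      using R(1) by (metis One_nat_def Suc_le_D diff_Suc_1 nonzero_mult_div_cancel_left
          power_Suc zero_neq_numeral)
    ultimately show ?thesis
      using R by (simp del: upt_Suc)
  qed
  also have "(2 ^ (1 + R) - 2 ^ 1) div 2 = (2::nat) ^ R - 1"
    by simp
  finally show ?thesis
    by (simp only: power_one_right)
qed

lemma nu_trunc_5_pow_minus_1:
  assumes k: "2 \<le> k"
  shows "nu_trunc 2 k (5 ^ e - 1) = 2 + nu_trunc 2 (k - 2) (int e)"
proof (rule nu_trunc_eqI)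
  fix j assume "j \<le> k"
  have five: "5 ^ e - 1 = 4 * geom_sum (5::int) e"
    using power_diff_1_eq_geom_sum[of "5::int" e] by simp
  show "int 2 ^ j dvd 5 ^ e - 1 \<longleftrightarrow> j \<le> 2 + nu_trunc 2 (k - 2) (int e)"
  proof (cases "j \<le> 2")
    case True
    then have "int 2 ^ j dvd 4"
      using le_imp_power_dvd[OF True, of "int 2"] by simp
    then show ?thesis
      using True five by simp
  next
    case False
    then obtain i where j: "j = 2 + i"
      by (metis le_add_diff_inverse nat_le_linear)
    have "int 2 ^ j dvd 5 ^ e - 1 \<longleftrightarrow> 2 ^ i dvd geom_sum (5::int) e"
      by (simp add: five j power_add)
    also have "\<dots> \<longleftrightarrow> 2 ^ i dvd e"
      using pow_dvd_geom_sum_iff[of 2 5 i e] by (simp add: cong_def)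
    also have "\<dots> \<longleftrightarrow> int 2 ^ i dvd int e"
      by (metis of_nat_dvd_iff of_nat_power)
    also have "\<dots> \<longleftrightarrow> j \<le> 2 + nu_trunc 2 (k - 2) (int e)"
      using pow_dvd_iff_le_nu_trunc[of 2 i "k - 2" "int e"] \<open>j \<le> k\<close> j by simp
    finally show ?thesis .
  qed
qed (use k nu_trunc_le[of 2 "k - 2" "int e"] in simp_all)

lemma cong_5_powD:
  assumes k: "2 \<le> k" and a: "[a = 5 ^ e] (mod 2 ^ k)"
  shows "[a = 1] (mod 4)" "nu_trunc 2 k (a - 1) = 2 + nu_trunc 2 (k - 2) (int e)"
proof -
  have "(4::int) dvd 2 ^ k"
    using le_imp_power_dvd[OF k, of "2::int"] by simp
  then have "[a = 5 ^ e] (mod 4)"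
    using a cong_dvd_modulus by blast
  moreover have "[(5::int) ^ e = 1 ^ e] (mod 4)"
    by (rule cong_pow) (simp add: cong_def)
  ultimately show "[a = 1] (mod 4)"
    by (simp add: cong_trans)
  have "[a - 1 = 5 ^ e - 1] (mod int 2 ^ k)"
    using a by (simp add: cong_diff)
  then show "nu_trunc 2 k (a - 1) = 2 + nu_trunc 2 (k - 2) (int e)"
    using nu_trunc_cong[of 2 "a - 1" "5 ^ e - 1" k] nu_trunc_5_pow_minus_1[OF k] by simp
qed

lemma cong_minus_5_powD:
  assumes k: "2 \<le> k" and a: "[a = - (5 ^ e)] (mod 2 ^ k)"
  shows "[a = 3] (mod 4)" "nu_trunc 2 k (a + 1) = 2 + nu_trunc 2 (k - 2) (int e)"
proof -
  have "[- a = 5 ^ e] (mod 2 ^ k)"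
    using a cong_minus_minus_iff[of a "- (5 ^ e)"] by simp
  then have "[- a = 1] (mod 4)" and nu: "nu_trunc 2 k (- a - 1) = 2 + nu_trunc 2 (k - 2) (int e)"
    using cong_5_powD[OF k] by blast+
  then have "[a = - 1] (mod 4)"
    using cong_minus_minus_iff[of a "- 1"] by simp
  moreover have "[- 1 = 3] (mod (4::int))"
    by (simp add: cong_def)
  ultimately show "[a = 3] (mod 4)"
    by (rule cong_trans)
  have "- a - 1 = - (a + 1)"
    by simp
  then show "nu_trunc 2 k (a + 1) = 2 + nu_trunc 2 (k - 2) (int e)"
    using nu nu_trunc_uminus[of 2 k "a + 1"] by simp
qed

lemma cycle_type_affine_map_2_pow_translation:
  assumes k: "k = 1 \<or> (k = 2 \<and> [a = 1] (mod 4))" and a: "odd a"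
  shows "cycle_type (affine_map (2 ^ k) a b) {0..<2 ^ k} = monom_of [(aord (2 ^ k) b, 2 ^ k div aord (2 ^ k) b)]"
proof -
  have "[a = 1] (mod int (2 ^ k))"
    using k a by (auto simp: cong_iff_dvd_diff)
  then show ?thesis
    using cycle_type_affine_map_translation[of 2 k b] by (simp add: affine_map_cong)
qed

lemma cycle_type_affine_map_mod_4_a_3:
  assumes a: "[a = 3] (mod 4)"
  shows "cycle_type (affine_map (2 ^ 2) a b) {0..<2 ^ 2}
       = (if even b then monom_of [(1, 2), (2, 1)] else monom_of [(2, 2)])"
proof -
  have "nu_trunc 2 2 (a + 1) = 2"
    using nu_trunc_3_mod_4(2)[OF a order_refl] nu_trunc_le[of 2 2 "a + 1"] by simp
  then show ?thesis
    using cycle_type_affine_map_3_mod_4_even[OF a order_refl, of b]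
      cycle_type_affine_map_3_mod_4_odd[OF a, of 2 b] by simp
qed

lemma cycle_type_affine_map_minus_5_pow_odd:
  assumes k: "3 \<le> k" and a: "[a = - (5 ^ e)] (mod 2 ^ k)" and b: "odd b"
  shows "let \<nu> = nu_trunc 2 (k - 2) (int e) in
         cycle_type (affine_map (2 ^ k) a b) {0..<2 ^ k} = monom_of [(2 ^ (k - 1 - \<nu>), 2 ^ (1 + \<nu>))]"
proof -
  define \<nu> where "\<nu> = nu_trunc 2 (k - 2) (int e)"
  have "\<nu> \<le> k - 2"
    by (simp add: \<nu>_def nu_trunc_le)
  have "(2::nat) ^ k div 2 ^ (k - 1 - \<nu>) = 2 ^ (k - (k - 1 - \<nu>))"
    by (rule power_diff[symmetric]) simp_all
  moreover have "k - (k - 1 - \<nu>) = 1 + \<nu>" "Suc (k - (2 + \<nu>)) = k - 1 - \<nu>"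
    using k \<open>\<nu> \<le> k - 2\<close> by simp_all
  ultimately have "Suc (k - (2 + \<nu>)) = k - 1 - \<nu>" "(2::nat) ^ k div 2 ^ (k - 1 - \<nu>) = 2 ^ (1 + \<nu>)"
    by simp_all
  then show ?thesis
    using cycle_type_affine_map_3_mod_4_odd[OF cong_minus_5_powD(1)[OF _ a], of k b] cong_minus_5_powD(2)[OF _ a] k b
    by (simp add: Let_def \<nu>_def)
qed

lemma cycle_type_affine_map_minus_5_pow_even:
  assumes k: "3 \<le> k" and a: "[a = - (5 ^ e)] (mod 2 ^ k)" and b: "even b"
  shows "let \<nu>' = nu_trunc 2 (k - 3) (int e) in
         cycle_type (affine_map (2 ^ k) a b) {0..<2 ^ k}
       = monom_of ([(1, 2), (2, 2 ^ (2 + \<nu>') - 1)] @ [(2 ^ s, 2 ^ (1 + \<nu>')). s \<leftarrow> [2..<k - 2 - \<nu>' + 1]])"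
proof -
  define \<nu>' where "\<nu>' = nu_trunc 2 (k - 3) (int e)"
  have "min (2 + nu_trunc 2 (k - 2) (int e)) (k - 1) = 2 + \<nu>'"
    using nu_trunc_smaller_bound[of "k - 3" "k - 2" 2 "int e"] k by (simp add: \<nu>'_def)
  then show ?thesis
    using cycle_type_affine_map_3_mod_4_even[OF cong_minus_5_powD(1)[OF _ a], of k b] cong_minus_5_powD(2)[OF _ a] k b
    by (simp add: Let_def \<nu>'_def)
qed

lemma cycle_type_affine_map_5_pow_small_nu_b:
  assumes k: "2 \<le> k" and a: "[a = 5 ^ e] (mod 2 ^ k)" and less: "nu_trunc 2 k b < nu_trunc 2 k (a - 1)"
  shows "cycle_type (affine_map (2 ^ k) a b) {0..<2 ^ k} = monom_of [(aord (2 ^ k) b, 2 ^ k div aord (2 ^ k) b)]"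
proof -
  have "[a = 1] (mod 4)" "[a = 1] (mod int 2)"
    using cong_5_powD(1)[OF k a] cong_dvd_modulus[OF cong_5_powD(1)[OF k a], of "int 2"] by simp_all
  then show ?thesis
    using cycle_type_affine_map_unipotent_small_nu_b[of 2 a k b] less by simp
qed

lemma cycle_type_affine_map_5_pow_large_nu_b:
  assumes k: "2 \<le> k" and a: "[a = 5 ^ e] (mod 2 ^ k)" and le: "nu_trunc 2 k (a - 1) \<le> nu_trunc 2 k b"
  shows "let \<nu> = nu_trunc 2 (k - 2) (int e) in
         cycle_type (affine_map (2 ^ k) a b) {0..<2 ^ k}
       = monom_of ([(1, 2 ^ (2 + \<nu>))] @ [(2 ^ s, 2 ^ (1 + \<nu>)). s \<leftarrow> [1..<k - 2 - \<nu> + 1]])"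
proof -
  have "[a = 1] (mod 4)" "[a = 1] (mod int 2)"
    using cong_5_powD(1)[OF k a] cong_dvd_modulus[OF cong_5_powD(1)[OF k a], of "int 2"] by simp_all
  then show ?thesis
    using cycle_type_affine_map_unipotent_large_nu_b[of 2 a k "2 + nu_trunc 2 (k - 2) (int e)" b]
      cong_5_powD(2)[OF k a] le
    by (simp add: Let_def)
qed

theorem proposition4p6:
  fixes p k :: nat and a b :: int
  assumes hp: "prime p" and hk: "k \<ge> 1" and ha: "\<not> int p dvd a"
  defines "CT \<equiv> cycle_type (affine_map (p ^ k) a b) {0..<p ^ k}"
      and "ordA \<equiv> ord (p ^ k) (nat (a mod int (p ^ k)))"
  shows
   "(p > 2 \<longrightarrow>
      ((\<not> [a = 1] (mod int p) \<longrightarrow>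
         (let o' = p_prime_part p ordA; w = multiplicity p ordA in
          CT = monom_of ([(1, 1), (o', (p ^ (k - w) - 1) div o')] @
                 [(o' * p ^ s, p ^ (k - 1 - w) * (p - 1) div o'). s \<leftarrow> [1..<w + 1]])))
     \<and> ([a = 1] (mod int p) \<and> nu_trunc p k b \<ge> nu_trunc p k (a - 1) \<longrightarrow>
         (let t = nu_trunc p k (a - 1) in
          CT = monom_of ([(1, p ^ t)] @
                 [(p ^ s, p ^ (t - 1) * (p - 1)). s \<leftarrow> [1..<k - t + 1]])))
     \<and> ([a = 1] (mod int p) \<and> nu_trunc p k b < nu_trunc p k (a - 1) \<longrightarrow>
          CT = monom_of [(aord (p ^ k) b, p ^ k div aord (p ^ k) b)])))
  \<and> (p = 2 \<longrightarrow>
      ((k = 1 \<or> (k = 2 \<and> [a = 1] (mod 4)) \<longrightarrow>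
          CT = monom_of [(aord (2 ^ k) b, 2 ^ k div aord (2 ^ k) b)])
     \<and> (k = 2 \<and> [a = 3] (mod 4) \<longrightarrow>
          CT = (if even b then monom_of [(1, 2), (2, 1)] else monom_of [(2, 2)]))
     \<and> (k \<ge> 3 \<longrightarrow> (\<forall>\<epsilon> e :: nat. \<epsilon> \<in> {0, 1} \<and> e < 2 ^ (k - 2) \<and>
            [a = (-1) ^ \<epsilon> * 5 ^ e] (mod 2 ^ k) \<longrightarrow>
          (\<epsilon> = 1 \<and> odd b \<longrightarrow>
             (let \<nu> = nu_trunc 2 (k - 2) (int e) in
              CT = monom_of [(2 ^ (k - 1 - \<nu>), 2 ^ (1 + \<nu>))]))
        \<and> (\<epsilon> = 1 \<and> even b \<longrightarrow>
             (let \<nu>' = nu_trunc 2 (k - 3) (int e) in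
              CT = monom_of ([(1, 2), (2, 2 ^ (2 + \<nu>') - 1)] @
                     [(2 ^ s, 2 ^ (1 + \<nu>')). s \<leftarrow> [2..<k - 2 - \<nu>' + 1]])))
        \<and> (\<epsilon> = 0 \<and> nu_trunc 2 k b < nu_trunc 2 k (a - 1) \<longrightarrow>
             CT = monom_of [(aord (2 ^ k) b, 2 ^ k div aord (2 ^ k) b)])
        \<and> (\<epsilon> = 0 \<and> nu_trunc 2 k b \<ge> nu_trunc 2 k (a - 1) \<longrightarrow>
             (let \<nu> = nu_trunc 2 (k - 2) (int e) in
              CT = monom_of ([(1, 2 ^ (2 + \<nu>))] @
                     [(2 ^ s, 2 ^ (1 + \<nu>)). s \<leftarrow> [1..<k - 2 - \<nu> + 1]])))))))"
proof (cases "p = 2")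
  case True
  then have "odd a"
    using ha by simp
  then show ?thesis
    unfolding CT_def True
    using cycle_type_affine_map_2_pow_translation[of k a b]
      cycle_type_affine_map_mod_4_a_3[of a b]
      cycle_type_affine_map_minus_5_pow_odd[of k a _ b] cycle_type_affine_map_minus_5_pow_even[of k a _ b]
      cycle_type_affine_map_5_pow_small_nu_b[of k a _ b] cycle_type_affine_map_5_pow_large_nu_b[of k a _ b]
    by (auto simp del: upt_Suc)
next
  case False
  have t_pos: "1 \<le> nu_trunc p k (a - 1)" if "[a = 1] (mod int p)"
    using that pow_dvd_iff_le_nu_trunc[OF hp hk, of "a - 1"] by (simp add: cong_iff_dvd_diff)
  show ?thesis
    unfolding CT_def ordA_def
    using False cycle_type_affine_map_nonunipotent[OF hp hk ha, of b]
      cycle_type_affine_map_unipotent_large_nu_b[OF hp _ _ refl t_pos, of b]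
      cycle_type_affine_map_unipotent_small_nu_b[OF hp, of a k b]
    by (auto simp: Let_def simp del: upt_Suc)
qed

end
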